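(* Let $G\subseteq W(\mathsf D_n)$ be a finite group acting on $L=\mathbb Z^{n+2}=\bigoplus_{i=-1}^n\mathbb Z l_i$ via $\Phi$. For $i\in\{-1,0,1,\dots,n\}$ let $f_i:G\to L$ be the coboundary $f_i(g)=\Phi(g)l_i-l_i$. Suppose $I\subseteq\{-1,1,2,\dots,n\}$ is an index set such that $\xi=\frac12\sum_{i\in I}f_i$ is an $L$-valued $1$-cocycle whose class $[\xi]\in\mathrm H^1(G,L)$ is nonzero. Then $-1\notin I$.
   Context: $W(\mathsf B_n)$ is the group of signed permutations of the $2n$ symbols $j^\pm$ ($j=1,\dots,n$), generated by the symmetric group $\mathfrak S_n$ (permuting indices) and the involutions $c_j$ exchanging $j^+$ and $j^-$; every element can be written as $c_{j_1}\cdots c_{j_t}\tau$ with distinct $j_i$ and $\tau\in\mathfrak S_n$. The character $\sigma(c_{j_1}\cdots c_{j_t}\tau)=(-1)^t$ has kernel $W(\mathsf D_n)$. The lattice $L$ with basis $l_{-1},l_0,l_1,\dots,l_n$ models $\mathrm{Pic}(\bar X)$ of a standard conic bundle with $n$ degenerate fibers ($l_0$ the fiber class, $l_j$ a component of the $j$-th degenerate fiber). For $g=c_{j_1}\cdots c_{j_t}\tau\in W(\mathsf D_n)$ ($t$ even), set $s(i)=-1$ if $i\in\{j_1,\dots,j_t\}$ and $s(i)=1$ otherwise; then $\Phi(g)$ is the integral matrix with $\Phi(g)l_0=l_0$, $\Phi(g)l_{-1}=l_{-1}+\frac t2 l_0-\sum_{i:\,s(i)=-1}l_i$, and for $v\ge1$,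 with $u=\tau^{-1}(v)$: $\Phi(g)l_v=l_u$ if $s(u)=1$ and $\Phi(g)l_v=l_0-l_u$ if $s(u)=-1$. *)

theory Defs
  imports "HOL-Combinatorics.Permutations"
begin

text \<open>A signed permutation c_{j_1}...c_{j_t} tau is represented by the pair (S, tau)
  with S = {j_1,...,j_t} (the indices i with s(i) = -1) and tau a permutation of {1..n}.\<close>
type_synonym sperm = "nat set \<times> (nat \<Rightarrow> nat)"

definition WD :: "nat \<Rightarrow> sperm set" where
  "WD n = {(S, \<tau>). S \<subseteq> {1..n} \<and> even (card S) \<and> \<tau> permutes {1..n}}"

text \<open>Group law, chosen so that Phi is a homomorphism (the action of G on L).\<close>
definition sp_mult :: "nat \<Rightarrow> sperm \<Rightarrow> sperm \<Rightarrow> sperm" where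
  "sp_mult n g h = ({u \<in> {1..n}. (u \<in> fst g) \<noteq> (snd g u \<in> fst h)}, snd h \<circ> snd g)"

definition sp_one :: sperm where
  "sp_one = ({}, id)"

text \<open>The lattice L = Z^{n+2} with basis l_{-1}, l_0, ..., l_n, as functions int => int
  supported on {-1..n}.\<close>
definition latL :: "nat \<Rightarrow> (int \<Rightarrow> int) set" where
  "latL n = {x. \<forall>j. j \<notin> {-1..int n} \<longrightarrow> x j = 0}"

definition lb :: "int \<Rightarrow> int \<Rightarrow> int" where
  "lb i = (\<lambda>j. if j = i then 1 else 0)"

definition phi_basis :: "nat \<Rightarrow> sperm \<Rightarrow> int \<Rightarrow> (int \<Rightarrow> int)" where
  "phi_basis n g i =
     (let S = fst g; \<tau> = snd g in
      if i = 0 then lb 0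
      else if i = -1 then
        (\<lambda>j. lb (-1) j + int (card S div 2) * lb 0 j - (\<Sum>k\<in>S. lb (int k) j))
      else (let u = inv \<tau> (nat i) in
            if u \<in> S then (\<lambda>j. lb 0 j - lb (int u) j) else lb (int u)))"

definition phi :: "nat \<Rightarrow> sperm \<Rightarrow> (int \<Rightarrow> int) \<Rightarrow> (int \<Rightarrow> int)" where
  "phi n g x = (\<lambda>j. \<Sum>i\<in>{-1..int n}. x i * phi_basis n g i j)"

definition cob :: "nat \<Rightarrow> int \<Rightarrow> sperm \<Rightarrow> (int \<Rightarrow> int)" where
  "cob n i g = (\<lambda>j. phi n g (lb i) j - lb i j)"

text \<open>xi = 1/2 sum_{i in I} f_i (meaningful when all coordinates of the sum are even).\<close>
definition xi :: "nat \<Rightarrow> int set \<Rightarrow> sperm \<Rightarrow> (int \<Rightarrow> int)" where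
  "xi n I g = (\<lambda>j. (\<Sum>i\<in>I. cob n i g j) div 2)"

end

theory Submission
  imports Defs
begin

text \<open>Suppose \<open>-1 \<in> I\<close> and let \<open>P = I - {-1}\<close>. For \<open>g = (S, \<tau>)\<close> and \<open>m \<ge> 1\<close>, the coefficient
  of \<open>l_m\<close> in \<open>\<Sum>_{i \<in> I} f_i(g)\<close> is \<open>-[m \<in> S] \<plusminus> [\<tau> m \<in> P] - [m \<in> P]\<close>, so integrality of \<open>\<xi>\<close>
  forces \<open>S\<close> to be the set of indices that \<open>\<tau>\<close> moves into or out of \<open>P\<close>. Since \<open>\<tau>\<close> is a
  permutation, as many indices enter \<open>P\<close> as leave it, namely \<open>|S|/2\<close> each, and comparing
  coefficients gives \<open>\<Sum>_{v \<in> P} f_v = f_{-1}\<close>. Hence \<open>\<xi> = f_{-1}\<close> is the coboundary of \<open>l_{-1}\<close>.\<close>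

lemma card_enter_eq_card_leave:
  assumes \<tau>: "\<tau> permutes A" and A: "finite A" and P: "P \<subseteq> A"
  shows "card {u\<in>A. u \<notin> P \<and> \<tau> u \<in> P} = card {u\<in>A. u \<in> P \<and> \<tau> u \<notin> P}"
    (is "card ?enter = card ?leave")
proof -
  define stay where "stay = {u\<in>A. u \<in> P \<and> \<tau> u \<in> P}"
  have fin: "finite ?enter" "finite ?leave" "finite stay"
    using A unfolding stay_def by simp_all
  have "card (?enter \<union> stay) = card ?enter + card stay"
    by (rule card_Un_disjoint) (use fin in \<open>auto simp: stay_def\<close>)
  moreover have "card (\<tau> ` (?enter \<union> stay)) = card (?enter \<union> stay)"
    by (rule card_image) (rule inj_on_subset[OF permutes_inj_on[OF \<tau>]], auto simp: stay_def)
  moreover have "\<tau> ` (?enter \<union> stay) = P"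
    using P permutes_image[OF \<tau>] permutes_in_image[OF \<tau>] unfolding stay_def by fastforce
  moreover have "card (?leave \<union> stay) = card ?leave + card stay"
    by (rule card_Un_disjoint) (use fin in \<open>auto simp: stay_def\<close>)
  moreover have "?leave \<union> stay = P"
    using P unfolding stay_def by auto
  ultimately show ?thesis
    by simp
qed

lemma card_moved_into_eq_half:
  assumes \<tau>: "\<tau> permutes A" and A: "finite A" and P: "P \<subseteq> A"
    and S: "S = {m\<in>A. (m \<in> P) \<noteq> (\<tau> m \<in> P)}"
  shows "card {v\<in>P. inv \<tau> v \<in> S} = card S div 2"
proof -
  define enter where "enter = {u\<in>A. u \<notin> P \<and> \<tau> u \<in> P}"
  define leave where "leave = {u\<in>A. u \<in> P \<and> \<tau> u \<notin> P}"
  have "{v\<in>P. inv \<tau> v \<in> S} = \<tau> ` enter"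
  proof
    show "\<tau> ` enter \<subseteq> {v\<in>P. inv \<tau> v \<in> S}"
      using permutes_inverses(2)[OF \<tau>] unfolding S enter_def by auto
    show "{v\<in>P. inv \<tau> v \<in> S} \<subseteq> \<tau> ` enter"
    proof
      fix v assume "v \<in> {v\<in>P. inv \<tau> v \<in> S}"
      then have "inv \<tau> v \<in> enter" and "v = \<tau> (inv \<tau> v)"
        using permutes_inverses(1)[OF \<tau>] unfolding S enter_def by auto
      then show "v \<in> \<tau> ` enter" by blast
    qed
  qed
  then have "card {v\<in>P. inv \<tau> v \<in> S} = card enter"
    using card_image permutes_inj_on[OF \<tau>] by metis
  moreover have "S = enter \<union> leave"
    unfolding S enter_def leave_def by auto
  then have "card S = card enter + card leave"
    using A by (simp add: card_Un_disjoint enter_def leave_def disjoint_iff)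
  moreover have "card enter = card leave"
    unfolding enter_def leave_def by (rule card_enter_eq_card_leave[OF \<tau> A P])
  ultimately show ?thesis
    by simp
qed

lemma phi_lb_eq_phi_basis:
  assumes "i \<in> {-1..int n}"
  shows "phi n g (lb i) j = phi_basis n g i j"
proof -
  have "phi n g (lb i) j = (\<Sum>k\<in>{-1..int n}. if i = k then phi_basis n g k j else 0)"
    unfolding phi_def lb_def by (intro sum.cong) auto
  also have "\<dots> = phi_basis n g i j"
    using assms by (simp add: sum.delta)
  finally show ?thesis .
qed

lemma sum_lb_of_nat:
  assumes "finite P" "0 \<notin> P"
  shows "(\<Sum>k\<in>P. lb (int k) j) = (if j \<ge> 1 \<and> nat j \<in> P then 1 else 0)"
proof -
  have "(\<Sum>k\<in>P. lb (int k) j) = (\<Sum>k\<in>P. if nat j = k \<and> j \<ge> 0 then 1 else 0)"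
    unfolding lb_def by (intro sum.cong) auto
  also have "\<dots> = (if j \<ge> 0 \<and> nat j \<in> P then 1 else 0)"
    using assms by (cases "j \<ge> 0") (simp_all add: sum.delta)
  finally show ?thesis
    using assms(2) by (cases "j = 0") auto
qed

lemma cob_minus_one:
  assumes "S \<subseteq> {1..n}"
  shows "cob n (-1) (S, \<tau>) j =
    (if j = 0 then int (card S div 2) else 0) - (if j \<ge> 1 \<and> nat j \<in> S then 1 else 0)"
proof -
  have "finite S" "0 \<notin> S"
    using assms finite_subset by auto
  then show ?thesis
    unfolding cob_def
    by (subst phi_lb_eq_phi_basis) (simp_all add: phi_basis_def sum_lb_of_nat, auto simp: lb_def)
qed

lemma cob_of_nat:
  assumes "v \<in> {1..n}" "\<tau> permutes {1..n}"
  shows "cob n (int v) (S, \<tau>) j =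
      (if j = 0 \<and> inv \<tau> v \<in> S then 1 else 0)
    + (if j = int (inv \<tau> v) then (if inv \<tau> v \<in> S then -1 else 1) else 0)
    - (if j = int v then 1 else 0)"
proof -
  have "inv \<tau> v \<in> {1..n}"
    using assms permutes_inv permutes_in_image by metis
  then show ?thesis
    unfolding cob_def using assms(1)
    by (subst phi_lb_eq_phi_basis) (auto simp: phi_basis_def lb_def Let_def)
qed

lemma sum_cob_of_nat:
  assumes P: "P \<subseteq> {1..n}" and \<tau>: "\<tau> permutes {1..n}"
  shows "(\<Sum>v\<in>P. cob n (int v) (S, \<tau>) j) =
      (if j = 0 then int (card {v\<in>P. inv \<tau> v \<in> S}) else 0)
    + (if j \<ge> 1 \<and> \<tau> (nat j) \<in> P then (if nat j \<in> S then -1 else 1) else 0)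
    - (if j \<ge> 1 \<and> nat j \<in> P then 1 else 0)"
proof -
  have fin: "finite P" and P0: "0 \<notin> P"
    using P finite_subset by auto
  have inv_eq: "(j = int (inv \<tau> v)) = (j \<ge> 0 \<and> \<tau> (nat j) = v)" for v
    using permutes_inverses[OF \<tau>] by auto
  have "(\<Sum>v\<in>P. if j = 0 \<and> inv \<tau> v \<in> S then 1 else 0) =
      (if j = 0 then int (card {v\<in>P. inv \<tau> v \<in> S}) else 0)"
    using fin by (simp add: sum.If_cases Int_def conj_commute)
  moreover have "(\<Sum>v\<in>P. if j = int (inv \<tau> v) then (if inv \<tau> v \<in> S then -1 else 1) else 0) =
      (\<Sum>v\<in>P. if \<tau> (nat j) = v \<and> j \<ge> 0 then (if nat j \<in> S then -1 else 1) else (0::int))"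
    by (intro sum.cong) (auto simp: inv_eq permutes_inverses(2)[OF \<tau>])
  moreover have "\<dots> = (if j \<ge> 1 \<and> \<tau> (nat j) \<in> P then (if nat j \<in> S then -1 else 1) else 0)"
    using fin P0 permutes_not_in[OF \<tau>, of 0]
    by (cases "j \<ge> 0"; cases "j = 0") (simp_all add: sum.delta)
  moreover have "(\<Sum>v\<in>P. if j = int v then 1 else 0) = (\<Sum>k\<in>P. lb (int k) j)"
    unfolding lb_def by (intro sum.cong) auto
  ultimately show ?thesis
    using assms
    by (simp add: cob_of_nat subset_iff sum.distrib sum_subtractf sum_lb_of_nat[OF fin P0])
qed

lemma moved_set_of_even_cob_sum:
  assumes g: "(S, \<tau>) \<in> WD n" and P: "P \<subseteq> {1..n}"
    and even: "\<forall>j. even (cob n (-1) (S, \<tau>) j + (\<Sum>v\<in>P. cob n (int v) (S, \<tau>) j))"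
  shows "S = {m\<in>{1..n}. (m \<in> P) \<noteq> (\<tau> m \<in> P)}"
proof -
  have S: "S \<subseteq> {1..n}" and \<tau>: "\<tau> permutes {1..n}"
    using g unfolding WD_def by auto
  have "(m \<in> S) = ((m \<in> P) \<noteq> (\<tau> m \<in> P))" if m: "m \<in> {1..n}" for m
    using even[rule_format, of "int m"] m
    unfolding cob_minus_one[OF S] sum_cob_of_nat[OF P \<tau>]
    by (auto split: if_splits)
  then show ?thesis
    using S by auto
qed

lemma sum_cob_eq_cob_minus_one:
  assumes g: "(S, \<tau>) \<in> WD n" and P: "P \<subseteq> {1..n}"
    and moved: "S = {m\<in>{1..n}. (m \<in> P) \<noteq> (\<tau> m \<in> P)}"
  shows "(\<Sum>v\<in>P. cob n (int v) (S, \<tau>) j) = cob n (-1) (S, \<tau>) j"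
proof -
  have S: "S \<subseteq> {1..n}" and \<tau>: "\<tau> permutes {1..n}"
    using g unfolding WD_def by auto
  have "\<tau> (nat j) = nat j" if "\<not> nat j \<le> n"
    using permutes_not_in[OF \<tau>] that by simp
  then show ?thesis
    unfolding cob_minus_one[OF S] sum_cob_of_nat[OF P \<tau>]
    using card_moved_into_eq_half[OF \<tau> finite_atLeastAtMost P moved] moved P
    by (auto simp: subset_iff)
qed

lemma xi_eq_cob_minus_one:
  assumes g: "g \<in> WD n" and I: "I \<subseteq> {-1} \<union> {1..int n}" "-1 \<in> I"
    and even: "\<forall>j. even (\<Sum>i\<in>I. cob n i g j)"
  shows "xi n I g = cob n (-1) g"
proof -
  obtain S \<tau> where g_eq: "g = (S, \<tau>)"
    by fastforce
  define P where "P = {v\<in>{1..n}. int v \<in> I}"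
  have P: "P \<subseteq> {1..n}"
    unfolding P_def by auto
  have "I = insert (-1) (int ` P)"
  proof (intro equalityI subsetI)
    fix i assume "i \<in> I"
    then have "i = -1 \<or> i \<in> {1..int n}"
      using I(1) by auto
    then show "i \<in> insert (-1) (int ` P)"
      using \<open>i \<in> I\<close> unfolding P_def by (auto intro!: image_eqI[of i int "nat i"])
  qed (use I(2) in \<open>auto simp: P_def\<close>)
  then have sum_I: "(\<Sum>i\<in>I. cob n i g j) = cob n (-1) g j + (\<Sum>v\<in>P. cob n (int v) g j)" for j
    using finite_subset[OF P] by (simp add: sum.reindex image_iff)
  have "S = {m\<in>{1..n}. (m \<in> P) \<noteq> (\<tau> m \<in> P)}"
    using moved_set_of_even_cob_sum[OF g[unfolded g_eq] P] even sum_I g_eq by simp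
  then have "(\<Sum>v\<in>P. cob n (int v) g j) = cob n (-1) g j" for j
    using sum_cob_eq_cob_minus_one[OF g[unfolded g_eq] P] g_eq by simp
  then show ?thesis
    unfolding xi_def sum_I by auto
qed

theorem lemma3p2:
  fixes n :: nat and G :: "sperm set" and I :: "int set"
  assumes G_fin: "finite G"
    and G_sub: "G \<subseteq> WD n"
    and G_one: "sp_one \<in> G"
    and G_mult: "\<forall>g\<in>G. \<forall>h\<in>G. sp_mult n g h \<in> G"
    and I_sub: "I \<subseteq> {-1} \<union> {1..int n}"
    and integral: "\<forall>g\<in>G. \<forall>j. even (\<Sum>i\<in>I. cob n i g j)"
    and cocycle: "\<forall>g\<in>G. \<forall>h\<in>G. xi n I (sp_mult n g h) = (\<lambda>j. xi n I g j + phi n g (xi n I h) j)"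
    and nonzero: "\<not> (\<exists>y\<in>latL n. \<forall>g\<in>G. xi n I g = (\<lambda>j. phi n g y j - y j))"
  shows "-1 \<notin> I"
proof
  assume "-1 \<in> I"
  then have "\<forall>g\<in>G. xi n I g = (\<lambda>j. phi n g (lb (-1)) j - lb (-1) j)"
    using xi_eq_cob_minus_one G_sub I_sub integral unfolding cob_def by blast
  moreover have "lb (-1) \<in> latL n"
    unfolding latL_def lb_def by auto
  ultimately show False
    using nonzero by blast
qed

end
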